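(* If $G$ and $H$ are finite simple graphs without isolated vertices that are both total Roman graphs, then $$\gamma_{tR}(G\times H)\le \frac{\gamma_{tR}(G)\gamma_{tR}(H)}{2}.$$
   Context: $\gamma_t(G)$ is the minimum size of a set $D\subseteq V(G)$ such that every vertex of $G$ has a neighbor in $D$. A total Roman dominating function on $G$ is a map $f:V(G)\to\{0,1,2\}$ such that every vertex with label 0 has a neighbor with label 2 and the subgraph induced by vertices with positive labels has no isolated vertices; $\gamma_{tR}(G)$ is the minimum of $\sum_v f(v)$ over such $f$. $G$ is a total Roman graph if $\gamma_{tR}(G)=2\gamma_t(G)$. The direct product $G\times H$ has vertex set $V(G)\times V(H)$, with $(g,h)(g',h')$ an edge iff $gg'\in E(G)$ and $hh'\in E(H)$. *)

theory Defs
  imports Complex_Main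
begin

definition simple_graph :: "'a set \<Rightarrow> 'a set set \<Rightarrow> bool" where
  "simple_graph V E \<longleftrightarrow> finite V \<and> (\<forall>e\<in>E. \<exists>u v. e = {u, v} \<and> u \<noteq> v \<and> u \<in> V \<and> v \<in> V)"

definition adj :: "'a set set \<Rightarrow> 'a \<Rightarrow> 'a \<Rightarrow> bool" where
  "adj E u v \<longleftrightarrow> {u, v} \<in> E \<and> u \<noteq> v"

definition no_isolated :: "'a set \<Rightarrow> 'a set set \<Rightarrow> bool" where
  "no_isolated V E \<longleftrightarrow> (\<forall>v\<in>V. \<exists>u\<in>V. adj E v u)"

definition total_dominating_set :: "'a set \<Rightarrow> 'a set set \<Rightarrow> 'a set \<Rightarrow> bool" where
  "total_dominating_set V E D \<longleftrightarrow> D \<subseteq> V \<and> (\<forall>v\<in>V. \<exists>u\<in>D. adj E v u)"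

definition gamma_t :: "'a set \<Rightarrow> 'a set set \<Rightarrow> nat" where
  "gamma_t V E = Min (card ` {D. total_dominating_set V E D})"

definition tRDF :: "'a set \<Rightarrow> 'a set set \<Rightarrow> ('a \<Rightarrow> nat) \<Rightarrow> bool" where
  "tRDF V E f \<longleftrightarrow>
     (\<forall>v\<in>V. f v \<le> 2) \<and> (\<forall>v. v \<notin> V \<longrightarrow> f v = 0) \<and>
     (\<forall>v\<in>V. f v = 0 \<longrightarrow> (\<exists>u\<in>V. adj E v u \<and> f u = 2)) \<and>
     (\<forall>v\<in>V. f v > 0 \<longrightarrow> (\<exists>u\<in>V. adj E v u \<and> f u > 0))"

definition weight :: "'a set \<Rightarrow> ('a \<Rightarrow> nat) \<Rightarrow> nat" where
  "weight V f = (\<Sum>v\<in>V. f v)"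

definition gamma_tR :: "'a set \<Rightarrow> 'a set set \<Rightarrow> nat" where
  "gamma_tR V E = Min {weight V f | f. tRDF V E f}"

definition total_roman_graph :: "'a set \<Rightarrow> 'a set set \<Rightarrow> bool" where
  "total_roman_graph V E \<longleftrightarrow> gamma_tR V E = 2 * gamma_t V E"

definition direct_prod_edges :: "'a set set \<Rightarrow> 'b set set \<Rightarrow> ('a \<times> 'b) set set" where
  "direct_prod_edges EG EH =
     {{(g, h), (g', h')} | g h g' h'. {g, g'} \<in> EG \<and> g \<noteq> g' \<and> {h, h'} \<in> EH \<and> h \<noteq> h'}"

end

theory Submission
  imports Defs
begin

text \<open>If \<open>D\<^sub>G\<close> and \<open>D\<^sub>H\<close> are minimum total dominating sets, then \<open>D\<^sub>G \<times> D\<^sub>H\<close> totally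
dominates \<open>G \<times> H\<close>, and labelling it with 2 gives a total Roman dominating function of
weight \<open>2 \<gamma>\<^sub>t(G) \<gamma>\<^sub>t(H)\<close>. For total Roman graphs this equals \<open>\<gamma>\<^sub>t\<^sub>R(G) \<gamma>\<^sub>t\<^sub>R(H) / 2\<close>.\<close>

lemma ex_min_total_dominating_set:
  assumes "finite V" "no_isolated V E"
  obtains D where "total_dominating_set V E D" "card D = gamma_t V E"
proof -
  have "{D. total_dominating_set V E D} \<subseteq> Pow V"
    by (auto simp: total_dominating_set_def)
  then have "finite {D. total_dominating_set V E D}"
    using assms(1) finite_subset by blast
  moreover have "total_dominating_set V E V"
    using assms(2) by (auto simp: total_dominating_set_def no_isolated_def)
  ultimately have "gamma_t V E \<in> card ` {D. total_dominating_set V E D}"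
    unfolding gamma_t_def by (intro Min_in) auto
  then show ?thesis using that by auto
qed

lemma adj_direct_prod_edgesI:
  assumes "adj EG g g'" "adj EH h h'"
  shows "adj (direct_prod_edges EG EH) (g, h) (g', h')"
  using assms unfolding adj_def direct_prod_edges_def by blast

lemma total_dominating_set_Times:
  assumes "total_dominating_set VG EG DG" "total_dominating_set VH EH DH"
  shows "total_dominating_set (VG \<times> VH) (direct_prod_edges EG EH) (DG \<times> DH)"
  unfolding total_dominating_set_def
proof (intro conjI ballI)
  show "DG \<times> DH \<subseteq> VG \<times> VH"
    using assms by (auto simp: total_dominating_set_def)
next
  fix x assume "x \<in> VG \<times> VH"
  then obtain g h where x: "x = (g, h)" "g \<in> VG" "h \<in> VH" by blast
  obtain g' where "g' \<in> DG" "adj EG g g'"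
    using assms(1) x by (auto simp: total_dominating_set_def)
  moreover obtain h' where "h' \<in> DH" "adj EH h h'"
    using assms(2) x by (auto simp: total_dominating_set_def)
  ultimately show "\<exists>u\<in>DG \<times> DH. adj (direct_prod_edges EG EH) x u"
    unfolding x(1) by (blast intro: adj_direct_prod_edgesI)
qed

lemma tRDF_twice_indicator:
  assumes "total_dominating_set V E D"
  shows "tRDF V E (\<lambda>x. if x \<in> D then 2 else 0)"
proof -
  have "D \<subseteq> V" and dom: "\<And>v. v \<in> V \<Longrightarrow> \<exists>u\<in>D. adj E v u"
    using assms by (auto simp: total_dominating_set_def)
  then show ?thesis
    unfolding tRDF_def by (fastforce dest: dom)
qed

lemma gamma_tR_le_weight:
  assumes "finite V" "tRDF V E f"
  shows "gamma_tR V E \<le> weight V f"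
proof -
  have "{weight V f | f. tRDF V E f} \<subseteq> {..2 * card V}"
  proof
    fix w assume "w \<in> {weight V f | f. tRDF V E f}"
    then obtain g where w: "w = weight V g" and g: "tRDF V E g" by auto
    have "(\<Sum>v\<in>V. g v) \<le> (\<Sum>v\<in>V. 2)"
      using g by (intro sum_mono) (auto simp: tRDF_def)
    then show "w \<in> {..2 * card V}" using w by (simp add: weight_def)
  qed
  then have "finite {weight V f | f. tRDF V E f}" using finite_subset by blast
  then show ?thesis unfolding gamma_tR_def using assms(2) by (intro Min_le) auto
qed

lemma gamma_tR_le_twice_card:
  assumes "finite V" "total_dominating_set V E D"
  shows "gamma_tR V E \<le> 2 * card D"
proof -
  have "D \<subseteq> V" using assms(2) by (simp add: total_dominating_set_def)
  then have "weight V (\<lambda>x. if x \<in> D then 2 else 0) = 2 * card D"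
    using assms(1) by (simp add: weight_def sum.If_cases Int_absorb1)
  then show ?thesis
    using gamma_tR_le_weight[OF assms(1) tRDF_twice_indicator[OF assms(2)]] by simp
qed

theorem corollary2p6:
  fixes VG :: "'a set" and EG :: "'a set set" and VH :: "'b set" and EH :: "'b set set"
  assumes "simple_graph VG EG" and "simple_graph VH EH"
    and "no_isolated VG EG" and "no_isolated VH EH"
    and "total_roman_graph VG EG" and "total_roman_graph VH EH"
  shows "real (gamma_tR (VG \<times> VH) (direct_prod_edges EG EH))
           \<le> real (gamma_tR VG EG) * real (gamma_tR VH EH) / 2"
proof -
  have finG: "finite VG" and finH: "finite VH"
    using assms(1,2) by (simp_all add: simple_graph_def)
  obtain DG where DG: "total_dominating_set VG EG DG" "card DG = gamma_t VG EG"
    using ex_min_total_dominating_set[OF finG assms(3)] by blast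
  obtain DH where DH: "total_dominating_set VH EH DH" "card DH = gamma_t VH EH"
    using ex_min_total_dominating_set[OF finH assms(4)] by blast
  have "gamma_tR (VG \<times> VH) (direct_prod_edges EG EH) \<le> 2 * card (DG \<times> DH)"
    using finG finH total_dominating_set_Times[OF DG(1) DH(1)]
    by (intro gamma_tR_le_twice_card) auto
  also have "\<dots> = 2 * gamma_t VG EG * gamma_t VH EH"
    using DG(2) DH(2) by (simp add: card_cartesian_product)
  finally have "real (gamma_tR (VG \<times> VH) (direct_prod_edges EG EH))
                  \<le> 2 * real (gamma_t VG EG) * real (gamma_t VH EH)"
    by (metis of_nat_le_iff of_nat_mult of_nat_numeral)
  then show ?thesis
    using assms(5,6) by (simp add: total_roman_graph_def)
qed

end
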